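(* Let $q=4$, let $k>0$ be an even integer, and let $g=S_{k+1}^2+S_{2k}^{q^k+1}$. For every $a\in\mathbb{F}_{q^{3k}}$ with $\operatorname{Tr}_{q^{3k}/q^k}(a)\neq 0$, there exists $y\in\mathbb{F}_{q^k}$ such that $x\mapsto \operatorname{Tr}_{q^{3k}/2}\bigl(a\,g(x+y)-a\,g(x)\bigr)$ is a nonzero constant function on $\mathbb{F}_{q^{3k}}$.
   Context: For a prime power $q$ with characteristic $p$ and positive integer $m$, $S_m=x+x^q+\cdots+x^{q^{m-1}}\in\mathbb{F}_p[x]$. For fields $\mathbb{F}_{Q^n}\supseteq\mathbb{F}_Q$, $\operatorname{Tr}_{Q^n/Q}(z)=z+z^Q+\cdots+z^{Q^{n-1}}$ is the trace map. *)

theory Defs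
  imports Main
begin

definition S :: "nat \<Rightarrow> nat \<Rightarrow> 'a::comm_semiring_1 \<Rightarrow> 'a" where
  "S q m x = (\<Sum>i<m. x ^ (q ^ i))"

text \<open>Trace map Tr_{Q^n/Q}(z) = z + z^Q + ... + z^(Q^(n-1)).\<close>
definition tr :: "nat \<Rightarrow> nat \<Rightarrow> 'a::comm_semiring_1 \<Rightarrow> 'a" where
  "tr Q n z = (\<Sum>i<n. z ^ (Q ^ i))"

end

theory Submission
  imports Defs "HOL-Number_Theory.Residues" "HOL-Computational_Algebra.Polynomial"
begin

text \<open>Let Q = 4^k. The field has characteristic 2, so every S_m is additive. For y in the
  subfield F_Q one has S_2k(y) = 2 S_k(y) = 0, hence g(x + y) = g(x) + L(y)^2 with L = S_(k+1).
  On F_Q the map L is y \<mapsto> S_k(y) + y, and S_k(S_k(y)) = k S_k(y) = 0 for even k, so L is an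
  involution of F_Q; as squaring is bijective, L(y)^2 takes every value w in F_Q. By transitivity
  of the trace, Tr(a w) = Tr_(Q/2)(Tr_(Q^3/Q)(a) w), and since the absolute trace is a nonzero
  polynomial of degree below the field size, some w makes the constant difference have nonzero
  trace.\<close>

lemma two_eq_zero_if_card_eq_power_2:
  assumes "card (UNIV :: 'a::field set) = 2 ^ n" and "n > 0"
  shows "(2::'a) = 0"
proof -
  have "of_nat (card (UNIV :: 'a set)) = (0::'a)"
    using CHAR_dvd_CARD of_nat_eq_0_iff_char_dvd by blast
  then have "(2::'a) ^ n = 0" using assms(1) by simp
  then show ?thesis by simp
qed

lemma square_add_char_2:
  assumes "(2::'a::comm_ring_1) = 0"
  shows "(x + y) ^ 2 = x ^ 2 + (y ^ 2 :: 'a)"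
  using assms by (simp add: power2_sum)

lemma tr_eq_S: "tr = S"
  by (simp add: fun_eq_iff tr_def S_def)

lemma S_add_length: "S q (m + n) z = S q m z + S q n (z ^ (q ^ m))"
  by (induction n) (simp_all add: S_def power_add power_mult add.assoc)

lemma S_Suc_fixed:
  assumes "z ^ (q ^ k) = z"
  shows "S q (k + 1) z = S q k z + z"
  using assms by (simp add: S_def)

lemma S_double_fixed:
  assumes "z ^ (q ^ k) = z"
  shows "S q (2 * k) z = 2 * S q k z"
  using S_add_length[of q k k z] assms by (simp add: mult_2)

context
  fixes q :: nat
  assumes power_q_add: "\<And>x y :: 'a::comm_ring_1. (x + y) ^ q = x ^ q + y ^ q"
begin

lemma power_q_power_add: "(x + y) ^ (q ^ n) = x ^ (q ^ n) + (y ^ (q ^ n) :: 'a)"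
  by (induction n arbitrary: x y) (simp_all add: power_mult power_q_add)

lemma zero_power_q_power: "(0::'a) ^ (q ^ n) = 0"
  using power_q_power_add[of 0 0 n] by simp

lemma sum_power_q_power: "sum f A ^ (q ^ n) = (\<Sum>i\<in>A. f i ^ (q ^ n) :: 'a)"
  by (induction A rule: infinite_finite_induct)
    (simp_all add: zero_power_q_power power_q_power_add)

lemma S_add: "S q m (x + y) = S q m x + (S q m y :: 'a)"
  by (simp add: S_def power_q_power_add sum.distrib)

lemma S_power_q_power: "S q m z ^ (q ^ n) = S q m (z ^ (q ^ n) :: 'a)"
  by (simp add: S_def sum_power_q_power flip: power_mult) (simp add: mult.commute)

lemma S_power_q_fixed:
  assumes "z ^ (q ^ k) = (z :: 'a)"
  shows "S q k z ^ q = S q k z"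
proof -
  have "S q k z ^ q + z = S q k (z ^ q) + z"
    using S_power_q_power[of k z 1] by simp
  also have "\<dots> = S q (k + 1) z"
    using S_add_length[of q 1 k z] by (simp add: S_def)
  also have "\<dots> = S q k z + z"
    using S_Suc_fixed[OF assms] .
  finally show ?thesis by simp
qed

lemma S_S_fixed:
  assumes "z ^ (q ^ k) = (z :: 'a)"
  shows "S q k (S q k z) = of_nat k * S q k z"
proof -
  have "S q k z ^ (q ^ i) = S q k z" for i
    by (induction i) (simp_all add: power_mult S_power_q_fixed[OF assms])
  then show ?thesis by (simp add: S_def)
qed

lemma S_Suc_involutive:
  assumes "(2::'a) = 0" and "even k" and "z ^ (q ^ k) = (z :: 'a)"
  shows "S q (k + 1) (S q (k + 1) z) = z"
proof -
  have "S q (k + 1) z ^ (q ^ k) = S q (k + 1) z"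
    using S_power_q_power assms(3) by simp
  then have "S q (k + 1) (S q (k + 1) z) = S q k (S q (k + 1) z) + S q (k + 1) z"
    by (rule S_Suc_fixed)
  also have "\<dots> = S q k (S q k z + z) + (S q k z + z)"
    by (simp only: S_Suc_fixed[OF assms(3)])
  also have "\<dots> = of_nat k * S q k z + 2 * S q k z + z"
    by (simp add: S_add S_S_fixed[OF assms(3)])
  also have "\<dots> = z"
    using assms(1,2) by (auto elim: evenE)
  finally show ?thesis .
qed

lemma tr_tower:
  assumes "w ^ (q ^ e) = (w :: 'a)"
  shows "tr q (e * n) (a * w) = tr q e (tr (q ^ e) n a * w)"
proof (induction n arbitrary: a)
  case 0 then show ?case by (simp add: tr_def zero_power_q_power)
next
  case (Suc n)
  have "tr q (e * Suc n) (a * w) = tr q e (a * w) + tr q (e * n) (a ^ (q ^ e) * w)"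
    using S_add_length[of q e "e * n" "a * w"] assms by (simp add: tr_eq_S power_mult_distrib)
  also have "\<dots> = tr q e ((a + tr (q ^ e) n (a ^ (q ^ e))) * w)"
    using Suc.IH[of "a ^ (q ^ e)"] by (simp add: tr_eq_S S_add distrib_right)
  also have "a + tr (q ^ e) n (a ^ (q ^ e)) = tr (q ^ e) (Suc n) a"
    using S_add_length[of "q ^ e" 1 n a] by (simp add: tr_eq_S S_def)
  finally show ?case .
qed

end

lemma power_4_add_char_2:
  assumes "(2::'a::comm_ring_1) = 0"
  shows "(x + y) ^ 4 = x ^ 4 + (y ^ 4 :: 'a)"
  using power_q_power_add[OF square_add_char_2[OF assms], of x y 2] by simp

text \<open>The library version \<open>finite_field_power_card_eq_same\<close> needs the sort \<open>finite_field\<close>;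
  here the field is only assumed to have finite \<open>UNIV\<close>.\<close>

lemma power_card_eq_self:
  fixes x :: "'a::field"
  assumes "finite (UNIV :: 'a set)"
  shows "x ^ card (UNIV :: 'a set) = x"
proof (cases "x = 0")
  case True then show ?thesis
    using assms by (simp add: finite_UNIV_card_ge_0)
next
  case False
  define U where "U = (UNIV :: 'a set) - {0}"
  have "(\<Prod>y\<in>U. x * y) = (\<Prod>y\<in>U. y)"
    by (rule prod.reindex_bij_witness[of _ "\<lambda>y. y / x" "\<lambda>y. x * y"]) (use False in \<open>auto simp: U_def\<close>)
  moreover have "card U = card (UNIV :: 'a set) - 1" and "(\<Prod>y\<in>U. y) \<noteq> 0"
    using assms by (simp_all add: U_def card_Diff_singleton)
  ultimately have "x * x ^ (card (UNIV :: 'a set) - 1) = x"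
    by (simp add: prod.distrib)
  then show ?thesis
    using assms by (simp add: finite_UNIV_card_ge_0 flip: power_Suc)
qed

lemma ex_tr_nonzero:
  assumes "finite (UNIV :: 'a::field set)" and "1 < q" and "0 < N"
    and "q ^ (N - 1) < card (UNIV :: 'a set)"
  shows "\<exists>x::'a. tr q N x \<noteq> 0"
proof (rule ccontr)
  assume all_zero: "\<not> ?thesis"
  define p :: "'a poly" where "p = (\<Sum>i<N. monom 1 (q ^ i))"
  have "poly p x = tr q N x" for x
    by (simp add: p_def tr_def poly_sum poly_monom)
  then have roots: "{x. poly p x = 0} = UNIV"
    using all_zero by auto
  have "degree p \<le> q ^ (N - 1)"
    unfolding p_def
    by (rule degree_sum_le) (use assms(2) in \<open>auto intro: order_trans[OF degree_monom_le]\<close>)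
  moreover have "coeff p (q ^ (N - 1)) = 1"
    using assms(2,3) by (simp add: p_def coeff_sum coeff_monom)
  then have "card {x. poly p x = 0} \<le> degree p"
    by (intro card_poly_roots_bound) auto
  ultimately show False
    using roots assms(4) by simp
qed

lemma ex_subfield_element_tr_nonzero:
  fixes a :: "'a::field"
  assumes fin: "finite (UNIV :: 'a set)" and card: "card (UNIV :: 'a set) = p ^ (e * n)"
    and power_p_add: "\<And>x y :: 'a. (x + y) ^ p = x ^ p + y ^ p"
    and "1 < p" and "0 < e" and "0 < n" and tr_a: "tr (p ^ e) n a \<noteq> 0"
  shows "\<exists>w. w ^ (p ^ e) = w \<and> tr p (e * n) (a * w) \<noteq> 0"
proof -
  have "p ^ (e * n - 1) < card (UNIV :: 'a set)"
    using assms(4-6) card by (simp add: power_strict_increasing)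
  then obtain x0 :: 'a where x0: "tr p (e * n) x0 \<noteq> 0"
    using ex_tr_nonzero[OF fin \<open>1 < p\<close>, of "e * n"] assms(5,6) by auto
  have power_Q_add: "(x + y) ^ (p ^ e) = x ^ (p ^ e) + y ^ (p ^ e)" for x y :: 'a
    by (rule power_q_power_add[OF power_p_add])
  have "x ^ ((p ^ e) ^ n) = x" for x :: 'a
    using power_card_eq_self[OF fin, of x] card by (simp add: power_mult)
  then have tr_fixed: "tr (p ^ e) n x ^ (p ^ e) = tr (p ^ e) n x" for x :: 'a
    unfolding tr_eq_S by (rule S_power_q_fixed[OF power_Q_add])
  define w where "w = tr (p ^ e) n x0 / tr (p ^ e) n a"
  have w_fixed: "w ^ (p ^ e) = w"
    by (simp add: w_def power_divide tr_fixed)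
  have "tr p (e * n) (a * w) = tr p e (tr (p ^ e) n a * w)"
    by (rule tr_tower[OF power_p_add w_fixed])
  also have "\<dots> = tr p e (tr (p ^ e) n x0 * 1)"
    using tr_a by (simp add: w_def)
  also have "\<dots> = tr p (e * n) x0"
    using tr_tower[OF power_p_add, of 1 e n x0] by simp
  finally show ?thesis
    using w_fixed x0 by auto
qed

lemma ex_S_Suc_square_eq:
  fixes w :: "'a::field"
  assumes two: "(2::'a) = 0" and "even k" and "0 < k" and w_fixed: "w ^ (4 ^ k) = w"
  shows "\<exists>y. y ^ (4 ^ k) = y \<and> S 4 (k + 1) y ^ 2 = w"
proof -
  define z where "z = w ^ (2 ^ (2 * k - 1))"
  have "z ^ 2 = w ^ (2 ^ (2 * k))"
    using \<open>0 < k\<close> by (simp add: z_def flip: power_mult power_Suc2)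
  then have z_square: "z ^ 2 = w"
    using w_fixed by (simp add: power_mult)
  have z_fixed: "z ^ (4 ^ k) = z"
    by (simp add: z_def w_fixed flip: power_mult) (simp add: power_mult mult.commute w_fixed)
  define y where "y = S 4 (k + 1) z"
  have "y ^ (4 ^ k) = y"
    unfolding y_def using S_power_q_power[OF power_4_add_char_2[OF two]] z_fixed by simp
  moreover have "S 4 (k + 1) y = z"
    unfolding y_def by (rule S_Suc_involutive[OF power_4_add_char_2[OF two] two \<open>even k\<close> z_fixed])
  ultimately show ?thesis
    using z_square by blast
qed

lemma S_form_shift_fixed:
  fixes x y :: "'a::comm_ring_1"
  assumes two: "(2::'a) = 0" and y_fixed: "y ^ (4 ^ k) = y"
  shows "S 4 (k + 1) (x + y) ^ 2 + S 4 (2 * k) (x + y) ^ (4 ^ k + 1)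
    = S 4 (k + 1) x ^ 2 + S 4 (2 * k) x ^ (4 ^ k + 1) + S 4 (k + 1) y ^ 2"
proof -
  have "S 4 (2 * k) y = 0"
    using S_double_fixed[OF y_fixed] two by simp
  then show ?thesis
    by (simp add: S_add[OF power_4_add_char_2[OF two]] square_add_char_2[OF two])
qed

theorem mainTheorem2:
  fixes k :: nat and g :: "'a::field \<Rightarrow> 'a"
  assumes fin: "finite (UNIV :: 'a set)"
    and card: "card (UNIV :: 'a set) = 4 ^ (3 * k)"
    and kpos: "k > 0" and keven: "even k"
    and g_def: "\<And>x. g x = (S 4 (k + 1) x) ^ 2 + (S 4 (2 * k) x) ^ (4 ^ k + 1)"
  shows "\<forall>a :: 'a. tr (4 ^ k) 3 a \<noteq> 0 \<longrightarrow>
           (\<exists>y :: 'a. y ^ (4 ^ k) = y \<and>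
              (\<exists>c :: 'a. c \<noteq> 0 \<and>
                 (\<forall>x :: 'a. tr 2 (6 * k) (a * g (x + y) - a * g x) = c)))"
proof (intro allI impI)
  fix a :: 'a
  assume tr_a: "tr (4 ^ k) 3 a \<noteq> 0"
  have four: "(4::nat) ^ k = 2 ^ (2 * k)"
    by (simp add: power_mult)
  have card_2: "card (UNIV :: 'a set) = 2 ^ (2 * k * 3)"
    using card by (metis four power_mult mult.commute)
  have two: "(2::'a) = 0"
    using two_eq_zero_if_card_eq_power_2[OF card_2] kpos by simp
  obtain w where w_fixed: "w ^ (4 ^ k) = w" and tr_aw: "tr 2 (6 * k) (a * w) \<noteq> 0"
    using ex_subfield_element_tr_nonzero[OF fin card_2 square_add_char_2[OF two]] kpos tr_a
    by (auto simp: four)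
  obtain y where y_fixed: "y ^ (4 ^ k) = y" and square: "S 4 (k + 1) y ^ 2 = w"
    using ex_S_Suc_square_eq[OF two keven kpos w_fixed] by blast
  have "g (x + y) = g x + w" for x
    using S_form_shift_fixed[OF two y_fixed, of x] by (simp only: g_def square)
  then have "a * g (x + y) - a * g x = a * w" for x
    by (simp add: algebra_simps)
  then show "\<exists>y. y ^ (4 ^ k) = y \<and>
      (\<exists>c. c \<noteq> 0 \<and> (\<forall>x. tr 2 (6 * k) (a * g (x + y) - a * g x) = c))"
    using y_fixed tr_aw by auto
qed

end
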